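(* Assume the setting in the context (in particular Assumption (A)). Let $\rho>0$, let $v_0\in V_f(\rho)$ and let $n$ be an integer with $n>\bar n_\rho$. Consider the fixed-rate restart recursion $v_{j+1}=\mathcal{A}(v_j,n)$, $j\geq 0$. Let $\epsilon>0$. Then: (i) the inequality $f(v_{M-1})-f(v_M)\leq \epsilon$ holds for every integer $M\geq \bar M$, where $$\bar M := 1+\frac{1}{2(\ln n-\ln \bar n_\rho)}\ln\left(1+\frac{f(v_0)-f^*}{\epsilon}\right);$$ (ii) if $n=\lceil e\,\bar n_\rho\rceil$, then the total number of iterations of $\mathcal{A}$ required to attain $f(v_{j-1})-f(v_j)\leq\epsilon$ (i.e. $n$ times the smallest $j\geq 1$ for which this holds) is upper bounded by $$\bar N_F^* := \lceil e\,\bar n_\rho\rceil\left\lceil 1+\frac12\ln\left(1+\frac{f(v_0)-f^*}{\epsilon}\right)\right\rceil.$$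
   Context: Let $f:\mathbb{R}^n\to(-\infty,\infty]$ be a proper closed convex function such that the problem $f^*=\min_{x\in\mathbb{R}^n}f(x)$ is solvable. Let $\Omega_f=\{x: f(x)=f^*\}$ be the optimal set, fix a norm $\|\cdot\|$ on $\mathbb{R}^n$ with dual norm $\|y\|_*=\sup\{y^Tz:\|z\|\leq 1\}$, and for $x\in\mathbb{R}^n$ let $\bar x=\arg\min_{z\in\Omega_f}\|x-z\|$. For $\rho\geq0$ let $V_f(\rho)=\{x\in\mathbb{R}^n: f(x)-f^*\leq\rho\}$. Let $\mathcal{A}$ be an iterative algorithm: for an initial point $x_0\in\mathrm{dom} f$ and integer $k\geq1$, $\mathcal{A}(x_0,k)\in\mathbb{R}^n$ denotes its $k$-th iterate started from $x_0$. Assumption (A): (i) for every $\rho>0$ there is $\mu_\rho>0$ with $f(x_0)-f^*\geq\frac{\mu_\rho}{2}\|x_0-\bar x_0\|^2$ for all $x_0\in V_f(\rho)$; (ii) there exist constants $a_f>0$, $L_f>0$ and a map $g:\mathbb{R}^n\to\mathbb{R}^n$ with $g(x)=0\iff x\in\Omega_f$ such that for every $x_0\in\mathrm{dom} f$: $f(\mathcal{A}(x_0,1))\leq f(x_0)-\frac{1}{2L_f}\|g(x_0)\|_*^2$ and $f(\mathcal{A}(x_0,k))-f^*\leq\frac{a_f}{(k+1)^2}\|x_0-\bar x_0\|^2$ for all $k\geq1$; (iii) $\bar n_\rho:=\max\{\frac12,\sqrt{2a_f/\mu_\rho}\}$. Here $e$ is Euler's number and $\lceil\cdot\rceil$ the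 ceiling. *)

theory Defs
  imports "HOL-Analysis.Analysis"
begin

definition is_norm :: "(real^'n \<Rightarrow> real) \<Rightarrow> bool" where
  "is_norm N \<longleftrightarrow>
     (\<forall>x. 0 \<le> N x) \<and> (\<forall>x. N x = 0 \<longleftrightarrow> x = 0) \<and>
     (\<forall>c x. N (c *\<^sub>R x) = \<bar>c\<bar> * N x) \<and> (\<forall>x y. N (x + y) \<le> N x + N y)"

definition dual_norm :: "(real^'n \<Rightarrow> real) \<Rightarrow> real^'n \<Rightarrow> real" where
  "dual_norm N y = Sup {y \<bullet> z | z. N z \<le> 1}"

definition dist_to :: "(real^'n \<Rightarrow> real) \<Rightarrow> (real^'n) set \<Rightarrow> real^'n \<Rightarrow> real" where
  "dist_to N S x = Inf {N (x - z) | z. z \<in> S}"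

definition epigraph_e :: "(real^'n \<Rightarrow> ereal) \<Rightarrow> ((real^'n) \<times> real) set" where
  "epigraph_e f = {(x, t). f x \<le> ereal t}"

definition proper_closed_convex :: "(real^'n \<Rightarrow> ereal) \<Rightarrow> bool" where
  "proper_closed_convex f \<longleftrightarrow>
     (\<forall>x. f x \<noteq> -\<infinity>) \<and> (\<exists>x. f x \<noteq> \<infinity>) \<and>
     convex (epigraph_e f) \<and> closed (epigraph_e f)"

definition edom :: "(real^'n \<Rightarrow> ereal) \<Rightarrow> (real^'n) set" where
  "edom f = {x. f x < \<infinity>}"

end

theory Submission
  imports Defs
begin

(* Quadratic growth on V_f(rho) gives dist(x, Omega_f)^2 <= 2 (f x - f* ) / mu_rho, so one run of
   n steps of the algorithm multiplies the optimality gap by at most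
   2 a_f / (mu_rho (n + 1)^2) <= (nbar_rho / n)^2 < 1. Hence the restart points stay in V_f(rho)
   and the gap at v_j is at most (nbar_rho / n)^(2 j) (f v_0 - f* ). As f v_M >= f*, the decrease
   f v_(M-1) - f v_M is bounded by the gap at v_(M-1), which is at most epsilon as soon as
   M - 1 >= ln (1 + (f v_0 - f* ) / epsilon) / (2 ln (n / nbar_rho)). For n = ceil (e nbar_rho)
   the logarithm ln (n / nbar_rho) is at least 1, which gives (ii).
   Only quadratic growth and the O(1/k^2) rate are used. *)

lemma ereal_obtain_gap:
  assumes "ereal c \<le> y" and "y - ereal c \<le> ereal r"
  obtains d where "y = ereal (c + d)" and "0 \<le> d" and "d \<le> r"
proof (cases y)
  case (real z)
  show ?thesis by (rule that[of "z - c"]) (use real assms in auto)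
qed (use assms in auto)

lemma power_mult_le_if_ln_le:
  fixes q D \<epsilon> :: real
  assumes "0 < q" and "q < 1" and "0 \<le> D" and "0 < \<epsilon>"
    and m: "ln (1 + D / \<epsilon>) / ln (1 / q) \<le> real m"
  shows "q ^ m * D \<le> \<epsilon>"
proof -
  have "0 < ln (1 / q)" using assms by simp
  then have "ln (1 + D / \<epsilon>) \<le> real m * ln (1 / q)"
    using m by (simp add: divide_le_eq)
  also have "\<dots> = - ln (q ^ m)" using \<open>0 < q\<close> by (simp add: ln_realpow ln_div)
  finally have "ln (q ^ m * (1 + D / \<epsilon>)) \<le> 0"
    using assms by (simp add: ln_mult add_pos_nonneg)
  then have "q ^ m * (1 + D / \<epsilon>) \<le> 1"
    using assms by (simp add: add_pos_nonneg)
  then have "q ^ m * D + q ^ m * \<epsilon> \<le> \<epsilon>"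
    using \<open>0 < \<epsilon>\<close> by (simp add: field_simps)
  moreover have "0 \<le> q ^ m * \<epsilon>" using assms by simp
  ultimately show ?thesis by linarith
qed

lemma restart_contracts_gap:
  fixes f :: "'a \<Rightarrow> ereal" and \<delta> :: "'a \<Rightarrow> real"
  assumes lower: "ereal fs \<le> f y"
    and growth: "ereal (\<mu> / 2 * (\<delta> x)\<^sup>2) \<le> f x - ereal fs"
    and rate: "f y - ereal fs \<le> ereal (a / (real n + 1)\<^sup>2 * (\<delta> x)\<^sup>2)"
    and "0 < \<mu>" and "0 \<le> a" and "0 < n" and a_\<mu>: "2 * a / \<mu> \<le> nbar\<^sup>2"
    and fx: "f x = ereal (fs + d)"
  obtains d' where "f y = ereal (fs + d')" and "0 \<le> d'" and "d' \<le> (nbar / real n)\<^sup>2 * d"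
proof -
  obtain d' where d': "f y = ereal (fs + d')" "0 \<le> d'" "d' \<le> a / (real n + 1)\<^sup>2 * (\<delta> x)\<^sup>2"
    using ereal_obtain_gap[OF lower rate] .
  have "\<mu> / 2 * (\<delta> x)\<^sup>2 \<le> d" using growth fx by simp
  moreover have "0 \<le> \<mu> / 2 * (\<delta> x)\<^sup>2" using \<open>0 < \<mu>\<close> by simp
  ultimately have "0 \<le> d" and "(\<delta> x)\<^sup>2 \<le> 2 * d / \<mu>"
    using \<open>0 < \<mu>\<close> by (linarith, simp add: field_simps)
  then have "d' \<le> a / (real n + 1)\<^sup>2 * (2 * d / \<mu>)"
    using d'(3) \<open>0 \<le> a\<close> by (meson divide_nonneg_nonneg mult_left_mono order_trans zero_le_power2)
  also have "\<dots> = (2 * a / \<mu>) / (real n + 1)\<^sup>2 * d" by (simp add: field_simps)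
  also have "\<dots> \<le> nbar\<^sup>2 / (real n + 1)\<^sup>2 * d"
    using a_\<mu> \<open>0 \<le> d\<close> by (intro mult_right_mono divide_right_mono) auto
  also have "\<dots> \<le> nbar\<^sup>2 / (real n)\<^sup>2 * d"
    using \<open>0 < n\<close> \<open>0 \<le> d\<close> by (intro mult_right_mono divide_left_mono) (auto simp: power_mono)
  finally show ?thesis using that d'(1,2) by (simp add: power_divide)
qed

lemma restart_iterates_gap:
  fixes f :: "'a \<Rightarrow> ereal" and \<delta> :: "'a \<Rightarrow> real" and Alg :: "'a \<Rightarrow> nat \<Rightarrow> 'a"
  assumes fs_min: "\<And>y. ereal fs \<le> f y"
    and growth: "\<And>x. f x \<le> ereal (fs + \<rho>) \<Longrightarrow> ereal (\<mu> / 2 * (\<delta> x)\<^sup>2) \<le> f x - ereal fs"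
    and rate: "\<And>x. f x < \<infinity> \<Longrightarrow>
                 f (Alg x n) - ereal fs \<le> ereal (a / (real n + 1)\<^sup>2 * (\<delta> x)\<^sup>2)"
    and "0 < \<mu>" and "0 \<le> a" and "0 < n" and "0 \<le> nbar" and "nbar \<le> real n"
    and a_\<mu>: "2 * a / \<mu> \<le> nbar\<^sup>2"
    and v0: "f v0 = ereal (fs + D0)" and "D0 \<le> \<rho>"
  shows "\<exists>d. f (((\<lambda>x. Alg x n) ^^ j) v0) = ereal (fs + d) \<and> 0 \<le> d \<and>
             d \<le> ((nbar / real n)\<^sup>2) ^ j * D0"
proof (induction j)
  case 0
  show ?case using v0 fs_min[of v0] by simp
next
  case (Suc j)
  define q where "q = (nbar / real n)\<^sup>2"
  define x where "x = ((\<lambda>x. Alg x n) ^^ j) v0"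
  obtain d where d: "f x = ereal (fs + d)" "0 \<le> d" "d \<le> q ^ j * D0"
    using Suc.IH unfolding q_def x_def by blast
  have "0 \<le> nbar / real n" "nbar / real n \<le> 1"
    using \<open>0 \<le> nbar\<close> \<open>nbar \<le> real n\<close> \<open>0 < n\<close> by auto
  then have "0 \<le> q" "q \<le> 1"
    unfolding q_def by (auto intro: power_le_one)
  moreover have "0 \<le> D0" using v0 fs_min[of v0] by simp
  ultimately have "q ^ j * D0 \<le> D0" by (simp add: mult_left_le_one_le power_le_one)
  then have in_V: "f x \<le> ereal (fs + \<rho>)" using d \<open>D0 \<le> \<rho>\<close> by simp
  have x_finite: "f x < \<infinity>" using d(1) by simp
  obtain d' where "f (Alg x n) = ereal (fs + d')" "0 \<le> d'" "d' \<le> q * d"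
    using restart_contracts_gap[where f = f and \<delta> = \<delta>, OF fs_min growth[OF in_V] rate[OF x_finite]
        \<open>0 < \<mu>\<close> \<open>0 \<le> a\<close> \<open>0 < n\<close> a_\<mu> d(1)]
    unfolding q_def .
  moreover have "q * d \<le> q ^ Suc j * D0" using d(3) \<open>0 \<le> q\<close> by (simp add: mult_left_mono mult.assoc)
  ultimately show ?case unfolding q_def x_def by auto
qed

lemma gap_sequence_decrease_le:
  fixes F :: "nat \<Rightarrow> ereal" and b x :: real
  assumes gap: "\<And>j. \<exists>d. F j = ereal (fs + d) \<and> 0 \<le> d \<and> d \<le> ((b / x)\<^sup>2) ^ j * D0"
    and "0 < b" and "b < x" and "0 \<le> D0" and "0 < \<epsilon>"
    and M: "1 + 1 / (2 * (ln x - ln b)) * ln (1 + D0 / \<epsilon>) \<le> real M"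
  shows "F (M - 1) - F M \<le> ereal \<epsilon>"
proof -
  define q where "q = (b / x)\<^sup>2"
  have "0 < q" "q < 1" using \<open>0 < b\<close> \<open>b < x\<close> unfolding q_def by (auto simp: power_less_one_iff)
  have "ln (1 / q) = 2 * (ln x - ln b)"
    using \<open>0 < b\<close> \<open>b < x\<close> unfolding q_def by (simp add: ln_div ln_realpow)
  then have bound: "1 + ln (1 + D0 / \<epsilon>) / ln (1 / q) \<le> real M" using M by simp
  have "0 \<le> ln (1 + D0 / \<epsilon>) / ln (1 / q)"
    using \<open>0 < q\<close> \<open>q < 1\<close> \<open>0 \<le> D0\<close> \<open>0 < \<epsilon>\<close> by (simp add: divide_nonneg_pos)
  then have "ln (1 + D0 / \<epsilon>) / ln (1 / q) \<le> real (M - 1)"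
    using bound by linarith
  then have "q ^ (M - 1) * D0 \<le> \<epsilon>"
    using power_mult_le_if_ln_le \<open>0 < q\<close> \<open>q < 1\<close> \<open>0 \<le> D0\<close> \<open>0 < \<epsilon>\<close> by blast
  moreover obtain d where "F (M - 1) = ereal (fs + d)" "d \<le> q ^ (M - 1) * D0"
    using gap unfolding q_def by blast
  moreover obtain d' where "F M = ereal (fs + d')" "0 \<le> d'"
    using gap by blast
  ultimately show ?thesis by simp
qed

lemma Least_le_ceiling:
  fixes P :: "nat \<Rightarrow> bool"
  assumes P: "\<And>M. 1 + t \<le> real M \<Longrightarrow> P M" and "0 \<le> t" and "t \<le> s"
  shows "real (LEAST j. 1 \<le> j \<and> P j) \<le> of_int \<lceil>1 + s\<rceil>"
proof -
  define K where "K = nat \<lceil>1 + s\<rceil>"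
  have K: "real K = of_int \<lceil>1 + s\<rceil>" using assms unfolding K_def by simp
  then have "1 + t \<le> real K" using \<open>t \<le> s\<close> by linarith
  then have "1 \<le> K \<and> P K" using P \<open>0 \<le> t\<close> by simp
  then have "(LEAST j. 1 \<le> j \<and> P j) \<le> K" by (rule Least_le)
  then show ?thesis using K by linarith
qed

lemma restart_total_iterations_le:
  fixes P :: "nat \<Rightarrow> bool" and b L :: real
  assumes P: "\<And>M. 1 + 1 / (2 * (ln (real n) - ln b)) * L \<le> real M \<Longrightarrow> P M"
    and "0 < b" and "0 \<le> L" and n: "real n = of_int \<lceil>exp 1 * b\<rceil>"
  shows "real n * real (LEAST j. 1 \<le> j \<and> P j)
           \<le> of_int \<lceil>exp 1 * b\<rceil> * of_int \<lceil>1 + 1/2 * L\<rceil>"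
proof -
  have "ln (exp 1 * b) \<le> ln (real n)"
    using \<open>0 < b\<close> n by (intro ln_mono) auto
  then have "1 \<le> ln (real n) - ln b" using \<open>0 < b\<close> by (simp add: ln_mult)
  then have "0 \<le> 1 / (2 * (ln (real n) - ln b)) * L"
    using \<open>0 \<le> L\<close> by simp
  moreover have "1 / (2 * (ln (real n) - ln b)) * L \<le> 1/2 * L"
    using \<open>1 \<le> ln (real n) - ln b\<close> \<open>0 \<le> L\<close> by (intro mult_right_mono) (auto simp: field_simps)
  ultimately have "real (LEAST j. 1 \<le> j \<and> P j) \<le> of_int \<lceil>1 + 1/2 * L\<rceil>"
    by (intro Least_le_ceiling[OF P])
  from mult_left_mono[OF this, of "real n"] show ?thesis by (simp flip: n)
qed

theorem mainTheorem1:
  fixes f :: "real^'n \<Rightarrow> ereal"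
    and fs :: real
    and N :: "real^'n \<Rightarrow> real"
    and Alg :: "real^'n \<Rightarrow> nat \<Rightarrow> real^'n"
    and g :: "real^'n \<Rightarrow> real^'n"
    and mu :: "real \<Rightarrow> real"
    and a L \<rho> \<epsilon> :: real
    and v0 :: "real^'n"
    and n :: nat
  assumes pcc: "proper_closed_convex f"
    and fs_min: "\<forall>x. ereal fs \<le> f x"
    and fs_att: "\<exists>x. f x = ereal fs"
    and N_norm: "is_norm N"
    and A_i: "\<forall>r>0. mu r > 0 \<and>
              (\<forall>x0. f x0 \<le> ereal (fs + r) \<longrightarrow>
                 f x0 - ereal fs \<ge> ereal (mu r / 2 * (dist_to N {x. f x = ereal fs} x0)\<^sup>2))"
    and a_pos: "a > 0" and L_pos: "L > 0"
    and g_zero: "\<forall>x. g x = 0 \<longleftrightarrow> f x = ereal fs"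
    and A_desc: "\<forall>x0\<in>edom f.
              f (Alg x0 1) \<le> f x0 - ereal (1 / (2 * L) * (dual_norm N (g x0))\<^sup>2)"
    and A_rate: "\<forall>x0\<in>edom f. \<forall>k\<ge>1.
              f (Alg x0 k) - ereal fs \<le>
                ereal (a / (real k + 1)\<^sup>2 * (dist_to N {x. f x = ereal fs} x0)\<^sup>2)"
    and rho_pos: "\<rho> > 0"
    and v0_V: "f v0 - ereal fs \<le> ereal \<rho>"
    and n_gt: "real n > max (1/2) (sqrt (2 * a / mu \<rho>))"
    and eps_pos: "\<epsilon> > 0"
  shows "(let nbar = max (1/2) (sqrt (2 * a / mu \<rho>));
              v = (\<lambda>j. ((\<lambda>x. Alg x n) ^^ j) v0);
              D0 = real_of_ereal (f v0) - fs
          in (\<forall>M::nat. real M \<ge> 1 + 1 / (2 * (ln (real n) - ln nbar)) * ln (1 + D0 / \<epsilon>)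
                  \<longrightarrow> f (v (M - 1)) - f (v M) \<le> ereal \<epsilon>)
           \<and> (real n = real_of_int \<lceil>exp 1 * nbar\<rceil> \<longrightarrow>
                real n * real (LEAST j::nat. j \<ge> 1 \<and> f (v (j - 1)) - f (v j) \<le> ereal \<epsilon>)
                  \<le> real_of_int \<lceil>exp 1 * nbar\<rceil> * real_of_int \<lceil>1 + 1/2 * ln (1 + D0 / \<epsilon>)\<rceil>))"
proof -
  define nbar where "nbar = max (1/2) (sqrt (2 * a / mu \<rho>))"
  define v where "v = (\<lambda>j. ((\<lambda>x. Alg x n) ^^ j) v0)"
  define D0 where "D0 = real_of_ereal (f v0) - fs"
  have "0 < mu \<rho>" using A_i rho_pos by blast
  have nbar: "0 < nbar" "nbar < real n" using n_gt unfolding nbar_def by auto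
  have "2 * a / mu \<rho> \<le> nbar\<^sup>2"
    unfolding nbar_def using a_pos \<open>0 < mu \<rho>\<close> by (intro sqrt_le_D) auto
  obtain d0 where "f v0 = ereal (fs + d0)" "0 \<le> d0" "d0 \<le> \<rho>"
    using ereal_obtain_gap[OF fs_min[rule_format] v0_V] .
  then have v0: "f v0 = ereal (fs + D0)" "0 \<le> D0" "D0 \<le> \<rho>" unfolding D0_def by simp_all
  have growth: "ereal (mu \<rho> / 2 * (dist_to N {x. f x = ereal fs} x)\<^sup>2) \<le> f x - ereal fs"
    if "f x \<le> ereal (fs + \<rho>)" for x
    using A_i rho_pos that by blast
  have rate: "f (Alg x n) - ereal fs \<le> ereal (a / (real n + 1)\<^sup>2 * (dist_to N {x. f x = ereal fs} x)\<^sup>2)"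
    if "f x < \<infinity>" for x
    using A_rate that nbar unfolding edom_def by simp
  have gap: "\<exists>d. f (v j) = ereal (fs + d) \<and> 0 \<le> d \<and> d \<le> ((nbar / real n)\<^sup>2) ^ j * D0" for j
    unfolding v_def
    using restart_iterates_gap[where f = f and Alg = Alg and n = n, OF fs_min[rule_format] growth rate]
      \<open>0 < mu \<rho>\<close> a_pos nbar \<open>2 * a / mu \<rho> \<le> nbar\<^sup>2\<close> v0 by simp
  have part_i: "f (v (M - 1)) - f (v M) \<le> ereal \<epsilon>"
    if "1 + 1 / (2 * (ln (real n) - ln nbar)) * ln (1 + D0 / \<epsilon>) \<le> real M" for M
    using gap_sequence_decrease_le[OF gap nbar v0(2) eps_pos that] .
  have "real n * real (LEAST j. 1 \<le> j \<and> f (v (j - 1)) - f (v j) \<le> ereal \<epsilon>)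
          \<le> of_int \<lceil>exp 1 * nbar\<rceil> * of_int \<lceil>1 + 1/2 * ln (1 + D0 / \<epsilon>)\<rceil>"
    if "real n = of_int \<lceil>exp 1 * nbar\<rceil>"
    using restart_total_iterations_le[OF part_i nbar(1) _ that] v0(2) eps_pos by simp
  with part_i show ?thesis unfolding Let_def nbar_def v_def D0_def by blast
qed

end
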